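(* Let $n$ be even, let $\varphi\in(0,1)$, and consider the problem BPAOAZ (defined in the context). The expected running time of $\text{EMPMO}_{\text{random}}$, in which party 1 is chosen with probability $\varphi$ and party 2 with probability $1-\varphi$ in each iteration, applied to BPAOAZ is bounded by $O\left(\left(\frac{1}{\varphi}+\frac{1}{1-\varphi}\right)\frac{n^2}{2}\log n\right)$.
   Context: BPAOAZ: for $\mathbf{x}=(x_1,\dots,x_n)\in\{0,1\}^n$ with $n$ even, party 1 has objectives $f_{11}(\mathbf{x})=\sum_{i=n/2+1}^{n}x_i$ and $f_{12}(\mathbf{x})=\sum_{i=1}^{n/2}x_i+\sum_{i=n/2+1}^{n}(1-x_i)$; party 2 has objectives $f_{21}(\mathbf{x})=\sum_{i=1}^{n/2}(1-x_i)+\sum_{i=n/2+1}^{n}x_i$ and $f_{22}(\mathbf{x})=\sum_{i=1}^{n/2}x_i$; all objectives are maximized. $F_m=(f_{m1},f_{m2})$. For party $m$: $\mathbf{z}\succeq_m\mathbf{x}$ if $f_{mk}(\mathbf{z})\ge f_{mk}(\mathbf{x})$ for $k=1,2$; $\mathbf{z}\succ_m\mathbf{x}$ if moreover strict for some $k$. The common Pareto set (solutions Pareto optimal for both parties) is $\{1^n\}$. One-bit mutation flips one uniformly random bit. $\text{EMPMO}_{\text{random}}$: choose $\mathbf{x}$ uniformly from $\{0,1\}^n$, $P=\{\mathbf{x}\}$. Each iteration: pick $\mathbf{x}\in P$ uniformly at random; pick party $m$ ($m=1$ with probability $\varphi$, $m=2$ with probability $1-\varphi$); apply one-bit mutation to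 $\mathbf{x}$ to get $\mathbf{x}'$; if no $\mathbf{z}\in P$ satisfies $\mathbf{z}\succ_m\mathbf{x}'$ or $F_m(\mathbf{z})=F_m(\mathbf{x}')$, set $P\leftarrow(P\setminus\{\mathbf{z}\in P:\mathbf{x}'\succ_m\mathbf{z}\})\cup\{\mathbf{x}'\}$; then set $P\leftarrow\{\mathbf{z}\in P:\nexists\,\mathbf{z}'\in P\setminus\{\mathbf{z}\}\text{ with }\mathbf{z}'\succeq_m\mathbf{z}\}$. The running time is the number of fitness evaluations (mutations) until the common Pareto-optimal solution is included in the population for the first time. *)

theory Defs
  imports "HOL-Probability.Probability"
begin

text \<open>Bit strings of length n are boolean lists; position i (0-based) corresponds to
  x_{i+1} of the paper. The first half is positions i < n div 2.\<close>

definition ones_first :: "nat \<Rightarrow> bool list \<Rightarrow> nat" where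
  "ones_first n x = (\<Sum>i<n div 2. of_bool (x ! i))"

definition ones_second :: "nat \<Rightarrow> bool list \<Rightarrow> nat" where
  "ones_second n x = (\<Sum>i\<in>{n div 2..<n}. of_bool (x ! i))"

definition zeros_first :: "nat \<Rightarrow> bool list \<Rightarrow> nat" where
  "zeros_first n x = (\<Sum>i<n div 2. of_bool (\<not> x ! i))"

definition zeros_second :: "nat \<Rightarrow> bool list \<Rightarrow> nat" where
  "zeros_second n x = (\<Sum>i\<in>{n div 2..<n}. of_bool (\<not> x ! i))"

text \<open>Objectives of BPAOAZ. Parties are encoded as booleans: True = party 1, False = party 2.\<close>

definition f11 :: "nat \<Rightarrow> bool list \<Rightarrow> nat" where
  "f11 n x = ones_second n x"
definition f12 :: "nat \<Rightarrow> bool list \<Rightarrow> nat" where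
  "f12 n x = ones_first n x + zeros_second n x"
definition f21 :: "nat \<Rightarrow> bool list \<Rightarrow> nat" where
  "f21 n x = zeros_first n x + ones_second n x"
definition f22 :: "nat \<Rightarrow> bool list \<Rightarrow> nat" where
  "f22 n x = ones_first n x"

definition Fobj :: "nat \<Rightarrow> bool \<Rightarrow> bool list \<Rightarrow> nat \<times> nat" where
  "Fobj n m x = (if m then (f11 n x, f12 n x) else (f21 n x, f22 n x))"

definition weakdom :: "nat \<Rightarrow> bool \<Rightarrow> bool list \<Rightarrow> bool list \<Rightarrow> bool" where
  "weakdom n m z x \<longleftrightarrow> fst (Fobj n m z) \<ge> fst (Fobj n m x) \<and> snd (Fobj n m z) \<ge> snd (Fobj n m x)"

definition dom :: "nat \<Rightarrow> bool \<Rightarrow> bool list \<Rightarrow> bool list \<Rightarrow> bool" where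
  "dom n m z x \<longleftrightarrow> weakdom n m z x \<and>
     (fst (Fobj n m z) > fst (Fobj n m x) \<or> snd (Fobj n m z) > snd (Fobj n m x))"

definition flip_bit :: "bool list \<Rightarrow> nat \<Rightarrow> bool list" where
  "flip_bit x i = x[i := \<not> x ! i]"

definition update_pop :: "nat \<Rightarrow> bool \<Rightarrow> bool list set \<Rightarrow> bool list \<Rightarrow> bool list set" where
  "update_pop n m P x' =
     (let P1 = (if \<not> (\<exists>z\<in>P. dom n m z x' \<or> Fobj n m z = Fobj n m x')
                then (P - {z\<in>P. dom n m x' z}) \<union> {x'} else P)
      in {z\<in>P1. \<not> (\<exists>z'\<in>P1 - {z}. weakdom n m z' z)})"

text \<open>One iteration of EMPMO_random (phi = probability of choosing party 1).
  The guard for the empty population is never triggered (the population stays nonempty);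
  it only makes the definition total.\<close>

definition empmo_step :: "nat \<Rightarrow> real \<Rightarrow> bool list set \<Rightarrow> bool list set pmf" where
  "empmo_step n \<phi> P =
     (if P = {} then return_pmf P else
      do { x \<leftarrow> pmf_of_set P;
           m \<leftarrow> bernoulli_pmf \<phi>;
           i \<leftarrow> pmf_of_set {..<n};
           return_pmf (update_pop n m P (flip_bit x i)) })"

definition all_ones :: "nat \<Rightarrow> bool list" where
  "all_ones n = replicate n True"

definition stopped_step :: "nat \<Rightarrow> real \<Rightarrow> bool list set \<Rightarrow> bool list set pmf" where
  "stopped_step n \<phi> P = (if all_ones n \<in> P then return_pmf P else empmo_step n \<phi> P)"

fun pop_dist :: "nat \<Rightarrow> real \<Rightarrow> nat \<Rightarrow> bool list set pmf" where
  "pop_dist n \<phi> 0 = map_pmf (\<lambda>x. {x}) (pmf_of_set {x. length x = n})"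
| "pop_dist n \<phi> (Suc t) = bind_pmf (pop_dist n \<phi> t) (stopped_step n \<phi>)"

text \<open>Expected running time: E[T] = sum over t \<ge> 0 of Pr[T > t], where T > t iff 1^n is not
  in the population after t mutations (of the stopped process).\<close>

definition expected_runtime :: "nat \<Rightarrow> real \<Rightarrow> ennreal" where
  "expected_runtime n \<phi> =
     (\<Sum>t. ennreal (measure_pmf.prob (pop_dist n \<phi> t) {P. all_ones n \<notin> P}))"

end

theory Submission
  imports Defs "HOL-Analysis.Harmonic_Numbers"
begin

text \<open>Let \<open>k\<close> be the largest number of ones in the population. For either party, weak
  dominance forces at least as many ones in each half of the string, and equal objective vectors
  force equal counts in both halves. Hence \<open>k\<close> never decreases, and a population of mutually
  nondominated strings has pairwise distinct first objective values, so at most \<open>n + 1\<close>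
  members. Selecting a string with \<open>k\<close> ones and flipping one of its \<open>n - k\<close> zeros, which
  happens with probability at least \<open>(n - k) / (n (n + 1))\<close>, yields an offspring with \<open>k + 1\<close>
  ones that is accepted by whichever party decides. So the potential \<open>n (n + 1) H(n - k)\<close>
  drops in expectation by at least one per step until \<open>1\<^sup>n\<close> appears, and the expected running
  time is at most \<open>n (n + 1) H(n) = O(n\<^sup>2 log n)\<close>. Since \<open>1/\<phi> + 1/(1 - \<phi>) \<ge> 4\<close>, this is
  within the claimed bound; neither \<open>\<phi>\<close> nor the parity of \<open>n\<close> plays a role.\<close>

section \<open>Ones in the two halves\<close>

definition ones :: "nat \<Rightarrow> bool list \<Rightarrow> nat" where
  "ones n z = ones_first n z + ones_second n z"

definition half_ones :: "nat \<Rightarrow> bool list \<Rightarrow> nat \<times> nat" where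
  "half_ones n z = (ones_first n z, ones_second n z)"

lemma of_bool_add_of_bool_not: "of_bool b + of_bool (\<not> b) = (1::'a::semiring_1)"
  by simp

lemma ones_first_add_zeros_first: "ones_first n z + zeros_first n z = n div 2"
  unfolding ones_first_def zeros_first_def sum.distrib[symmetric] of_bool_add_of_bool_not by simp

lemma ones_second_add_zeros_second: "ones_second n z + zeros_second n z = n - n div 2"
  unfolding ones_second_def zeros_second_def sum.distrib[symmetric] of_bool_add_of_bool_not by simp

lemma ones_eq_card: "ones n z = card {j. j < n \<and> z ! j}"
proof -
  have "ones n z = (\<Sum>j<n. of_bool (z ! j))"
    unfolding ones_def ones_first_def ones_second_def lessThan_atLeast0
    by (simp only: sum.atLeastLessThan_concat[of 0 "n div 2" n] div_le_dividend zero_le)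
  then show ?thesis by (simp add: Collect_conj_eq lessThan_def)
qed

lemma ones_le: "ones n z \<le> n"
  using card_mono[of "{..<n}" "{j. j < n \<and> z ! j}"] by (auto simp: ones_eq_card)

lemma Fobj_eq_half_ones:
  "Fobj n m z = (if m then (ones_second n z, ones_first n z + (n - n div 2 - ones_second n z))
                 else (n div 2 - ones_first n z + ones_second n z, ones_first n z))"
  using ones_first_add_zeros_first[of n z] ones_second_add_zeros_second[of n z]
  unfolding Fobj_def f11_def f12_def f21_def f22_def by auto

lemma ones_first_le: "ones_first n z \<le> n div 2"
  using ones_first_add_zeros_first[of n z] by simp

lemma ones_second_le: "ones_second n z \<le> n - n div 2"
  using ones_second_add_zeros_second[of n z] by simp

text \<open>Up to constants, the objectives of party 1 are \<open>(b, a - b)\<close> and those of party 2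
  are \<open>(b - a, a)\<close>, where \<open>a\<close> and \<open>b\<close> count the ones in the two halves; either way a
  weakly dominating string has at least as many ones in each half.\<close>

lemma weakdom_imp_half_ones_le:
  assumes "weakdom n m z' z"
  shows "ones_first n z \<le> ones_first n z' \<and> ones_second n z \<le> ones_second n z'"
  using assms ones_first_le[of n z] ones_first_le[of n z'] ones_second_le[of n z] ones_second_le[of n z']
  by (cases m) (auto simp: weakdom_def Fobj_eq_half_ones)

lemma Fobj_eq_iff_half_ones_eq: "Fobj n m z = Fobj n m z' \<longleftrightarrow> half_ones n z = half_ones n z'"
  using ones_first_le[of n z] ones_first_le[of n z'] ones_second_le[of n z] ones_second_le[of n z']
  by (cases m) (auto simp: Fobj_eq_half_ones half_ones_def)

lemma weakdom_imp_ones_less: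
  assumes "weakdom n m z' z" "half_ones n z' \<noteq> half_ones n z"
  shows "ones n z < ones n z'"
  using weakdom_imp_half_ones_le[OF assms(1)] assms(2) by (auto simp: ones_def half_ones_def)

lemma dom_imp_ones_less: "dom n m z' z \<Longrightarrow> ones n z < ones n z'"
  by (metis dom_def Fobj_eq_iff_half_ones_eq weakdom_imp_ones_less less_irrefl)

lemma fst_Fobj_le: "fst (Fobj n m z) \<le> n"
  using ones_first_le[of n z] ones_second_le[of n z] by (auto simp: Fobj_eq_half_ones)

lemma length_flip_bit [simp]: "length (flip_bit x i) = length x"
  by (simp add: flip_bit_def)

lemma ones_flip_bit:
  assumes "i < length x" "\<not> x ! i"
  shows "ones n (flip_bit x i) = ones n x + of_bool (i < n)"
proof -
  have "{j. j < n \<and> flip_bit x i ! j} = {j. j < n \<and> x ! j} \<union> {j. j = i \<and> i < n}"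
    using assms by (auto simp: flip_bit_def nth_list_update)
  then show ?thesis
    using assms by (auto simp: ones_eq_card card_insert_if)
qed

lemma card_zero_bits: "card {j. j < n \<and> \<not> z ! j} = n - ones n z"
proof -
  have "{j. j < n \<and> \<not> z ! j} = {..<n} - {j. j < n \<and> z ! j}" by auto
  then show ?thesis by (simp add: ones_eq_card card_Diff_subset subset_eq)
qed

lemma ones_eq_imp_all_ones:
  assumes "length z = n" "ones n z = n"
  shows "z = all_ones n"
proof -
  have "card {j. j < n \<and> \<not> z ! j} = 0" using assms(2) by (simp add: card_zero_bits)
  then have "\<forall>j<n. z ! j" by auto
  then show ?thesis using assms(1) by (simp add: all_ones_def list_eq_iff_nth_eq)
qed

section \<open>The population update\<close>

definition accept_offspring :: "nat \<Rightarrow> bool \<Rightarrow> bool list set \<Rightarrow> bool list \<Rightarrow> bool list set" where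
  "accept_offspring n m P x' =
     (if \<not> (\<exists>z\<in>P. dom n m z x' \<or> Fobj n m z = Fobj n m x')
      then (P - {z\<in>P. dom n m x' z}) \<union> {x'} else P)"

definition nondominated :: "nat \<Rightarrow> bool \<Rightarrow> bool list set \<Rightarrow> bool list set" where
  "nondominated n m Q = {z\<in>Q. \<not> (\<exists>z'\<in>Q - {z}. weakdom n m z' z)}"

definition max_ones :: "nat \<Rightarrow> bool list set \<Rightarrow> nat" where
  "max_ones n P = Max (ones n ` P)"

lemma update_pop_eq_nondominated_accept_offspring:
  "update_pop n m P x' = nondominated n m (accept_offspring n m P x')"
  by (simp add: update_pop_def accept_offspring_def nondominated_def Let_def)

lemma ones_le_max_ones: "finite P \<Longrightarrow> z \<in> P \<Longrightarrow> ones n z \<le> max_ones n P"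
  by (simp add: max_ones_def)

lemma max_ones_attained:
  assumes "finite P" "P \<noteq> {}"
  obtains w where "w \<in> P" "ones n w = max_ones n P"
proof -
  have "max_ones n P \<in> ones n ` P" using assms by (simp add: max_ones_def)
  then show ?thesis using that by (metis imageE)
qed

lemma accept_offspring_subset: "accept_offspring n m P x' \<subseteq> insert x' P"
  by (auto simp: accept_offspring_def)

lemma finite_accept_offspring: "finite P \<Longrightarrow> finite (accept_offspring n m P x')"
  using accept_offspring_subset by (rule finite_subset) simp

lemma accept_offspring_nonempty: "P \<noteq> {} \<Longrightarrow> accept_offspring n m P x' \<noteq> {}"
  by (auto simp: accept_offspring_def)

lemma inj_on_half_ones_accept_offspring:
  assumes "inj_on (half_ones n) P"
  shows "inj_on (half_ones n) (accept_offspring n m P x')"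
proof (cases "\<exists>z\<in>P. dom n m z x' \<or> Fobj n m z = Fobj n m x'")
  case False
  then have "half_ones n x' \<notin> half_ones n ` P" by (auto simp: Fobj_eq_iff_half_ones_eq)
  with assms have "inj_on (half_ones n) (insert x' (P - {z\<in>P. dom n m x' z}))"
    by (auto intro: inj_on_subset)
  with False show ?thesis by (simp add: accept_offspring_def)
qed (simp add: accept_offspring_def assms)

text \<open>A string of \<open>P\<close> is only removed in favour of a dominating offspring, which has more ones.\<close>

lemma max_ones_le_accept_offspring:
  assumes "finite P" "P \<noteq> {}"
  shows "max_ones n P \<le> max_ones n (accept_offspring n m P x')"
proof -
  have fin: "finite (accept_offspring n m P x')"
    using assms(1) by (rule finite_accept_offspring)
  obtain y where y: "y \<in> P" "ones n y = max_ones n P"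
    using max_ones_attained[OF assms] .
  show ?thesis
  proof (cases "y \<in> accept_offspring n m P x'")
    case True
    then show ?thesis using y fin by (metis ones_le_max_ones)
  next
    case False
    with y(1) have "x' \<in> accept_offspring n m P x'" "dom n m x' y"
      by (auto simp: accept_offspring_def split: if_splits)
    then show ?thesis
      using y fin dom_imp_ones_less[of n m x' y] ones_le_max_ones by (metis less_imp_le order_trans)
  qed
qed

lemma offspring_mem_accept_offspring:
  assumes "finite P" "max_ones n P < ones n x'"
  shows "x' \<in> accept_offspring n m P x'"
proof -
  have "ones n z < ones n x'" if "z \<in> P" for z
    using le_less_trans[OF ones_le_max_ones[OF assms(1) that] assms(2)] .
  then have "\<not> (\<exists>z\<in>P. dom n m z x' \<or> Fobj n m z = Fobj n m x')"
    using dom_imp_ones_less by (fastforce simp: Fobj_eq_iff_half_ones_eq half_ones_def ones_def)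
  then show ?thesis by (simp add: accept_offspring_def)
qed

lemma nondominated_subset: "nondominated n m Q \<subseteq> Q"
  by (auto simp: nondominated_def)

lemma max_ones_mem_nondominated:
  assumes "finite Q" "inj_on (half_ones n) Q" "w \<in> Q" "ones n w = max_ones n Q"
  shows "w \<in> nondominated n m Q"
proof -
  have "\<not> weakdom n m z' w" if "z' \<in> Q - {w}" for z'
  proof
    assume "weakdom n m z' w"
    moreover have "half_ones n z' \<noteq> half_ones n w"
      using assms(2,3) that by (auto dest: inj_onD)
    ultimately have "ones n w < ones n z'" by (rule weakdom_imp_ones_less)
    with assms that show False using ones_le_max_ones[of Q z' n] by simp
  qed
  with assms(3) show ?thesis by (auto simp: nondominated_def)
qed

lemma max_ones_nondominated:
  assumes "finite Q" "Q \<noteq> {}" "inj_on (half_ones n) Q"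
  shows "max_ones n (nondominated n m Q) = max_ones n Q"
proof -
  obtain w where w: "w \<in> Q" "ones n w = max_ones n Q"
    using max_ones_attained[OF assms(1,2)] .
  then have w': "w \<in> nondominated n m Q"
    using max_ones_mem_nondominated[OF assms(1,3)] by blast
  have fin: "finite (nondominated n m Q)"
    using nondominated_subset assms(1) by (rule finite_subset)
  have "max_ones n (nondominated n m Q) \<le> max_ones n Q"
    unfolding max_ones_def using w' assms(1) by (intro Max_mono image_mono nondominated_subset) auto
  moreover have "max_ones n Q \<le> max_ones n (nondominated n m Q)"
    using w ones_le_max_ones[OF fin w', of n] by simp
  ultimately show ?thesis by (rule antisym)
qed

text \<open>Two strings with the same first objective are comparable, so a set of mutually
  nondominated strings takes each of the \<open>n + 1\<close> possible first objective values at most once.\<close>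

lemma weakdom_cases_if_fst_Fobj_eq:
  "fst (Fobj n m z) = fst (Fobj n m z') \<Longrightarrow> weakdom n m z z' \<or> weakdom n m z' z"
  by (auto simp: weakdom_def)

lemma card_nondominated_le: "card (nondominated n m Q) \<le> Suc n"
proof -
  let ?key = "\<lambda>z. fst (Fobj n m z)"
  have "inj_on ?key (nondominated n m Q)"
  proof (rule inj_onI, rule ccontr)
    fix z z' assume "z \<in> nondominated n m Q" "z' \<in> nondominated n m Q" "?key z = ?key z'" "z \<noteq> z'"
    then show False
      using weakdom_cases_if_fst_Fobj_eq[of n m z z'] by (auto simp: nondominated_def)
  qed
  then have "card (nondominated n m Q) = card (?key ` nondominated n m Q)"
    by (simp add: card_image)
  also have "\<dots> \<le> card {..n}"
    using fst_Fobj_le by (intro card_mono) auto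
  finally show ?thesis by simp
qed

definition valid_pop :: "nat \<Rightarrow> bool list set \<Rightarrow> bool" where
  "valid_pop n P \<longleftrightarrow> finite P \<and> P \<noteq> {} \<and> (\<forall>z\<in>P. length z = n) \<and> inj_on (half_ones n) P
     \<and> card P \<le> Suc n"

lemma valid_pop_update_pop:
  assumes "valid_pop n P" "length x' = n"
  shows "valid_pop n (update_pop n m P x')"
proof -
  let ?Q = "accept_offspring n m P x'"
  let ?R = "nondominated n m ?Q"
  have Q: "finite ?Q" "?Q \<noteq> {}" "\<forall>z\<in>?Q. length z = n" "inj_on (half_ones n) ?Q"
    using assms accept_offspring_subset[of n m P x'] accept_offspring_nonempty[of P n m x']
      finite_accept_offspring[of P n m x'] inj_on_half_ones_accept_offspring[of n P m x']
    by (auto simp: valid_pop_def)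
  obtain w where "w \<in> ?Q" "ones n w = max_ones n ?Q"
    using max_ones_attained[OF Q(1,2)] .
  then have "?R \<noteq> {}"
    using max_ones_mem_nondominated[OF Q(1,4)] by blast
  moreover have R: "?R \<subseteq> ?Q"
    by (rule nondominated_subset)
  then have "finite ?R" "inj_on (half_ones n) ?R" "\<forall>z\<in>?R. length z = n"
    using Q finite_subset inj_on_subset by blast+
  ultimately show ?thesis
    using card_nondominated_le[of n m ?Q]
    unfolding valid_pop_def update_pop_eq_nondominated_accept_offspring by blast
qed

lemma max_ones_update_pop:
  assumes "valid_pop n P"
  shows "max_ones n (update_pop n m P x') = max_ones n (accept_offspring n m P x')"
  unfolding update_pop_eq_nondominated_accept_offspring
  using assms by (intro max_ones_nondominated finite_accept_offspring accept_offspring_nonempty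
      inj_on_half_ones_accept_offspring) (simp_all add: valid_pop_def)

lemma max_ones_le_update_pop:
  assumes "valid_pop n P"
  shows "max_ones n P \<le> max_ones n (update_pop n m P x')"
  using assms max_ones_le_accept_offspring[of P n m x']
  by (simp add: max_ones_update_pop valid_pop_def)

lemma max_ones_update_pop_gt:
  assumes "valid_pop n P" "max_ones n P < ones n x'"
  shows "max_ones n P < max_ones n (update_pop n m P x')"
proof -
  have "finite P" using assms(1) by (simp add: valid_pop_def)
  then have "ones n x' \<le> max_ones n (accept_offspring n m P x')"
    using assms(2) by (intro ones_le_max_ones finite_accept_offspring offspring_mem_accept_offspring)
  then show ?thesis
    using assms by (simp add: max_ones_update_pop)
qed

lemma max_ones_le:
  assumes "valid_pop n P"
  shows "max_ones n P \<le> n"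
proof -
  obtain w where "w \<in> P" "ones n w = max_ones n P"
    using assms max_ones_attained by (auto simp: valid_pop_def)
  then show ?thesis using ones_le[of n w] by simp
qed

lemma max_ones_less:
  assumes "valid_pop n P" "all_ones n \<notin> P"
  shows "max_ones n P < n"
proof -
  obtain w where w: "w \<in> P" "ones n w = max_ones n P"
    using assms(1) max_ones_attained by (auto simp: valid_pop_def)
  then have "ones n w \<noteq> n"
    using assms ones_eq_imp_all_ones by (auto simp: valid_pop_def)
  then show ?thesis using w ones_le[of n w] by simp
qed

section \<open>Drift analysis\<close>

lemma emeasure_bind_pmf_ge:
  fixes M :: "'a pmf" and f :: "'a \<Rightarrow> 'b pmf"
  assumes "\<And>x. x \<in> set_pmf M \<Longrightarrow> r \<le> emeasure (f x) A"
  shows "r \<le> emeasure (bind_pmf M f) A"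
proof -
  have "r = (\<integral>\<^sup>+x. r \<partial>M)"
    by (simp add: measure_pmf.emeasure_space_1)
  also have "\<dots> \<le> (\<integral>\<^sup>+x. emeasure (f x) A \<partial>M)"
    using assms by (intro nn_integral_mono_AE AE_pmfI)
  finally show ?thesis by simp
qed

lemma emeasure_bind_pmf_of_set_ge:
  fixes f :: "'a \<Rightarrow> 'b pmf"
  assumes "finite S" "x \<in> S"
  shows "emeasure (f x) A / card S \<le> emeasure (bind_pmf (pmf_of_set S) f) A"
proof -
  have "emeasure (f x) A \<le> (\<Sum>y\<in>S. emeasure (f y) A)"
    using assms by (intro member_le_sum) simp_all
  moreover have "S \<noteq> {}" using assms(2) by blast
  ultimately show ?thesis
    using assms(1) by (simp add: nn_integral_pmf_of_set divide_right_mono_ennreal)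
qed

lemma emeasure_pmf_of_set_real:
  assumes "finite S" "S \<noteq> {}"
  shows "emeasure (measure_pmf (pmf_of_set S)) A = ennreal (real (card (S \<inter> A)) / real (card S))"
  using assms by (simp add: measure_pmf.emeasure_eq_measure measure_pmf_of_set)

lemma stopped_step_eq:
  assumes "all_ones n \<notin> P" "P \<noteq> {}"
  shows "stopped_step n \<phi> P = bind_pmf (pmf_of_set P) (\<lambda>x. bind_pmf (bernoulli_pmf \<phi>)
           (\<lambda>m. map_pmf (\<lambda>i. update_pop n m P (flip_bit x i)) (pmf_of_set {..<n})))"
  using assms by (simp add: stopped_step_def empmo_step_def map_pmf_def)

lemma set_pmf_stopped_step:
  assumes "valid_pop n P" "all_ones n \<notin> P" "Q \<in> set_pmf (stopped_step n \<phi> P)"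
  obtains x m i where "x \<in> P" "Q = update_pop n m P (flip_bit x i)"
proof -
  have "{..<n} \<noteq> {}" using max_ones_less[OF assms(1,2)] by auto
  moreover have "finite P" "P \<noteq> {}" using assms(1) by (simp_all add: valid_pop_def)
  ultimately show ?thesis
    using assms(3) that by (auto simp: stopped_step_eq[OF assms(2)])
qed

lemma valid_pop_stopped_step:
  assumes "valid_pop n P" "Q \<in> set_pmf (stopped_step n \<phi> P)"
  shows "valid_pop n Q \<and> max_ones n P \<le> max_ones n Q"
proof (cases "all_ones n \<in> P")
  case True
  then show ?thesis using assms by (simp add: stopped_step_def)
next
  case False
  obtain x m i where x: "x \<in> P" and Q: "Q = update_pop n m P (flip_bit x i)"
    using set_pmf_stopped_step[OF assms(1) False assms(2)] .
  have "length (flip_bit x i) = n" using assms(1) x by (simp add: valid_pop_def)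
  then show ?thesis
    using Q valid_pop_update_pop[OF assms(1)] max_ones_le_update_pop[OF assms(1)] by simp
qed

lemma emeasure_flip_zero_progress:
  assumes P: "valid_pop n P" "all_ones n \<notin> P" and w: "w \<in> P" "ones n w = max_ones n P"
  shows "ennreal (real (n - max_ones n P) / real n)
           \<le> emeasure (map_pmf (\<lambda>i. update_pop n m P (flip_bit w i)) (pmf_of_set {..<n}))
               {Q. max_ones n P < max_ones n Q}"
proof -
  let ?k = "max_ones n P"
  let ?A = "{Q. ?k < max_ones n Q}"
  let ?U = "\<lambda>i. update_pop n m P (flip_bit w i)"
  define Z where "Z = {i. i < n \<and> \<not> w ! i}"
  have "Z \<subseteq> {..<n} \<inter> ?U -` ?A"
  proof
    fix i assume "i \<in> Z"
    moreover have "length w = n" using P(1) w(1) by (simp add: valid_pop_def)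
    ultimately have "ones n (flip_bit w i) = Suc ?k"
      using w(2) ones_flip_bit[of i w n] by (auto simp: Z_def)
    then show "i \<in> {..<n} \<inter> ?U -` ?A"
      using \<open>i \<in> Z\<close> max_ones_update_pop_gt[OF P(1)] by (auto simp: Z_def)
  qed
  then have "card Z \<le> card ({..<n} \<inter> ?U -` ?A)"
    by (intro card_mono) auto
  moreover have "card Z = n - ?k"
    using card_zero_bits[of n w] w(2) by (simp add: Z_def)
  ultimately have "ennreal (real (n - ?k) / real n) \<le> ennreal (real (card ({..<n} \<inter> ?U -` ?A)) / real n)"
    by (intro ennreal_leI divide_right_mono) simp_all
  also have "\<dots> = emeasure (map_pmf ?U (pmf_of_set {..<n})) ?A"
    using max_ones_less[OF P] by (subst emeasure_map_pmf, subst emeasure_pmf_of_set_real) auto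
  finally show ?thesis .
qed

text \<open>A best string of \<open>P\<close> is selected with probability at least \<open>1 / (n + 1)\<close>, and
  flipping any of its \<open>n - max_ones n P\<close> zeros creates an offspring that improves \<open>max_ones\<close>,
  whichever party decides.\<close>

lemma emeasure_stopped_step_progress:
  assumes P: "valid_pop n P" and not_done: "all_ones n \<notin> P"
  shows "ennreal (real (n - max_ones n P) / real (n * Suc n))
           \<le> emeasure (stopped_step n \<phi> P) {Q. max_ones n P < max_ones n Q}"
proof -
  let ?k = "max_ones n P"
  let ?A = "{Q. ?k < max_ones n Q}"
  let ?U = "\<lambda>x m i. update_pop n m P (flip_bit x i)"
  have fin: "finite P" "P \<noteq> {}" "card P \<le> Suc n"
    using P by (auto simp: valid_pop_def)
  obtain w where w: "w \<in> P" "ones n w = ?k"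
    using max_ones_attained[OF fin(1,2)] .
  have "real (n - ?k) / real (n * Suc n) = real (n - ?k) / real n / real (Suc n)"
    by (simp add: algebra_simps)
  also have "\<dots> \<le> real (n - ?k) / real n / real (card P)"
    using fin by (intro divide_left_mono) (auto simp: card_gt_0_iff)
  finally have "ennreal (real (n - ?k) / real (n * Suc n)) \<le> ennreal (real (n - ?k) / real n) / card P"
    using fin by (simp add: ennreal_of_nat_eq_real_of_nat divide_ennreal card_gt_0_iff)
  also have "\<dots> \<le> emeasure (bind_pmf (bernoulli_pmf \<phi>) (\<lambda>m. map_pmf (?U w m) (pmf_of_set {..<n}))) ?A / card P"
    using P not_done w by (intro divide_right_mono_ennreal emeasure_bind_pmf_ge emeasure_flip_zero_progress)
  also have "\<dots> \<le> emeasure (stopped_step n \<phi> P) ?A"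
    unfolding stopped_step_eq[OF not_done fin(2)] using fin(1) w(1) by (rule emeasure_bind_pmf_of_set_ge)
  finally show ?thesis .
qed

lemma nn_integral_add_sum_emeasure_le_potential:
  fixes K :: "'s \<Rightarrow> 's pmf" and d :: "nat \<Rightarrow> 's pmf" and G :: "'s \<Rightarrow> ennreal"
  assumes d_Suc: "\<And>t. d (Suc t) = bind_pmf (d t) K"
    and drift: "\<And>t s. s \<in> set_pmf (d t) \<Longrightarrow> (\<integral>\<^sup>+s'. G s' \<partial>K s) + indicator B s \<le> G s"
  shows "(\<integral>\<^sup>+s. G s \<partial>d T) + (\<Sum>t<T. emeasure (d t) B) \<le> (\<integral>\<^sup>+s. G s \<partial>d 0)"
proof (induction T)
  case (Suc T)
  have "(\<integral>\<^sup>+s. G s \<partial>d (Suc T)) + emeasure (d T) B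
      = (\<integral>\<^sup>+s. (\<integral>\<^sup>+s'. G s' \<partial>K s) + indicator B s \<partial>d T)"
    by (simp add: d_Suc nn_integral_add)
  also have "\<dots> \<le> (\<integral>\<^sup>+s. G s \<partial>d T)"
    by (intro nn_integral_mono_AE AE_pmfI drift)
  finally have step: "(\<integral>\<^sup>+s. G s \<partial>d (Suc T)) + emeasure (d T) B \<le> (\<integral>\<^sup>+s. G s \<partial>d T)" .
  have "(\<integral>\<^sup>+s. G s \<partial>d (Suc T)) + (\<Sum>t<Suc T. emeasure (d t) B)
      = ((\<integral>\<^sup>+s. G s \<partial>d (Suc T)) + emeasure (d T) B) + (\<Sum>t<T. emeasure (d t) B)"
    by (simp add: ac_simps)
  also have "\<dots> \<le> (\<integral>\<^sup>+s. G s \<partial>d T) + (\<Sum>t<T. emeasure (d t) B)"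
    using step by (rule add_right_mono)
  also have "\<dots> \<le> (\<integral>\<^sup>+s. G s \<partial>d 0)"
    by (rule Suc.IH)
  finally show ?case .
qed simp

lemma suminf_emeasure_le_potential:
  fixes K :: "'s \<Rightarrow> 's pmf" and d :: "nat \<Rightarrow> 's pmf" and G :: "'s \<Rightarrow> ennreal"
  assumes d_Suc: "\<And>t. d (Suc t) = bind_pmf (d t) K"
    and I_0: "\<And>s. s \<in> set_pmf (d 0) \<Longrightarrow> I s"
    and I_K: "\<And>s s'. I s \<Longrightarrow> s' \<in> set_pmf (K s) \<Longrightarrow> I s'"
    and drift: "\<And>s. I s \<Longrightarrow> (\<integral>\<^sup>+s'. G s' \<partial>K s) + indicator B s \<le> G s"
  shows "(\<Sum>t. emeasure (d t) B) \<le> (\<integral>\<^sup>+s. G s \<partial>d 0)"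
  unfolding suminf_eq_SUP
proof (rule SUP_least)
  fix T
  have I: "I s" if "s \<in> set_pmf (d t)" for s t
    using that by (induction t arbitrary: s) (auto simp: d_Suc intro: I_0 I_K)
  have "(\<Sum>t<T. emeasure (d t) B) \<le> (\<integral>\<^sup>+s. G s \<partial>d T) + (\<Sum>t<T. emeasure (d t) B)"
    by (intro add_increasing) simp_all
  also have "\<dots> \<le> (\<integral>\<^sup>+s. G s \<partial>d 0)"
    using d_Suc by (rule nn_integral_add_sum_emeasure_le_potential) (blast intro: drift I)
  finally show "(\<Sum>t<T. emeasure (d t) B) \<le> (\<integral>\<^sup>+s. G s \<partial>d 0)" .
qed

definition runtime_potential :: "nat \<Rightarrow> bool list set \<Rightarrow> ennreal" where
  "runtime_potential n P = ennreal (real (n * Suc n) * harm (n - max_ones n P))"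

lemma harm_diff_ge:
  assumes "k < k'" "k' \<le> n"
  shows "harm (n - k') + 1 / real (n - k) \<le> (harm (n - k) :: real)"
proof -
  have "harm (n - k') \<le> (harm (n - Suc k) :: real)"
    using assms by (intro harm_mono) simp
  moreover have "n - k = Suc (n - Suc k)"
    using assms by simp
  ultimately show ?thesis
    by (simp add: harm_Suc inverse_eq_divide)
qed

lemma runtime_potential_decrease:
  assumes "valid_pop n Q" "max_ones n P \<le> max_ones n Q" "max_ones n P < n"
  shows "runtime_potential n Q
           + ennreal (real (n * Suc n) / real (n - max_ones n P)) * indicator {Q. max_ones n P < max_ones n Q} Q
         \<le> runtime_potential n P"
proof (cases "max_ones n P < max_ones n Q")
  case True
  let ?c = "real (n * Suc n)"
  have "harm (n - max_ones n Q) + 1 / real (n - max_ones n P) \<le> (harm (n - max_ones n P) :: real)"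
    using True max_ones_le[OF assms(1)] by (rule harm_diff_ge)
  from mult_left_mono[OF this, of ?c]
  have "?c * harm (n - max_ones n Q) + ?c / real (n - max_ones n P) \<le> ?c * harm (n - max_ones n P)"
    by (simp add: distrib_left)
  then show ?thesis
    using True by (simp add: runtime_potential_def harm_nonneg flip: ennreal_plus)
next
  case False
  then show ?thesis using assms(2) by (simp add: runtime_potential_def)
qed

lemma runtime_potential_drift:
  assumes P: "valid_pop n P"
  shows "(\<integral>\<^sup>+Q. runtime_potential n Q \<partial>stopped_step n \<phi> P) + indicator {P. all_ones n \<notin> P} P
           \<le> runtime_potential n P"
proof (cases "all_ones n \<in> P")
  case True
  then show ?thesis by (simp add: stopped_step_def)
next
  case False
  let ?K = "stopped_step n \<phi> P"
  let ?k = "max_ones n P"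
  let ?A = "{Q. ?k < max_ones n Q}"
  define r where "r = ennreal (real (n * Suc n) / real (n - ?k))"
  have k: "?k < n" using max_ones_less[OF P False] .
  have "1 = r * ennreal (real (n - ?k) / real (n * Suc n))"
    using k by (simp add: r_def del: of_nat_mult flip: ennreal_mult)
  also have "\<dots> \<le> r * emeasure ?K ?A"
    using emeasure_stopped_step_progress[OF P False] by (rule mult_left_mono) simp
  finally have "1 \<le> r * emeasure ?K ?A" .
  then have "(\<integral>\<^sup>+Q. runtime_potential n Q \<partial>?K) + indicator {P. all_ones n \<notin> P} P
      \<le> (\<integral>\<^sup>+Q. runtime_potential n Q \<partial>?K) + r * emeasure ?K ?A"
    using False by (simp add: add_left_mono)
  also have "\<dots> = (\<integral>\<^sup>+Q. runtime_potential n Q + r * indicator ?A Q \<partial>?K)"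
    by (simp add: nn_integral_add nn_integral_cmult_indicator)
  also have "\<dots> \<le> (\<integral>\<^sup>+Q. runtime_potential n P \<partial>?K)"
    using valid_pop_stopped_step[OF P] k unfolding r_def
    by (intro nn_integral_mono_AE AE_pmfI runtime_potential_decrease) blast+
  also have "\<dots> = runtime_potential n P"
    by (simp add: measure_pmf.emeasure_space_1)
  finally show ?thesis .
qed

lemma set_pmf_pop_dist_0: "set_pmf (pop_dist n \<phi> 0) = (\<lambda>x. {x}) ` {x. length x = n}"
proof -
  have "finite {x :: bool list. length x = n}"
    using finite_lists_length_eq[of "UNIV :: bool set" n] by simp
  moreover have "{x :: bool list. length x = n} \<noteq> {}"
    using length_replicate[of n True] by blast
  ultimately show ?thesis by simp
qed

lemma valid_pop_singleton: "length x = n \<Longrightarrow> valid_pop n {x}"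
  by (simp add: valid_pop_def)

lemma expected_runtime_le: "expected_runtime n \<phi> \<le> ennreal (real (n * Suc n) * harm n)"
proof -
  have "expected_runtime n \<phi> = (\<Sum>t. emeasure (pop_dist n \<phi> t) {P. all_ones n \<notin> P})"
    by (simp add: expected_runtime_def measure_pmf.emeasure_eq_measure)
  also have "\<dots> \<le> (\<integral>\<^sup>+P. runtime_potential n P \<partial>pop_dist n \<phi> 0)"
  proof (rule suminf_emeasure_le_potential[where K = "stopped_step n \<phi>" and I = "valid_pop n"])
    show "pop_dist n \<phi> (Suc t) = bind_pmf (pop_dist n \<phi> t) (stopped_step n \<phi>)" for t
      by simp
    show "valid_pop n P" if "P \<in> set_pmf (pop_dist n \<phi> 0)" for P
      using that unfolding set_pmf_pop_dist_0 by (auto intro: valid_pop_singleton)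
    show "valid_pop n Q" if "valid_pop n P" "Q \<in> set_pmf (stopped_step n \<phi> P)" for P Q
      using valid_pop_stopped_step[OF that] by blast
  qed (rule runtime_potential_drift)
  also have "\<dots> \<le> (\<integral>\<^sup>+P. ennreal (real (n * Suc n) * harm n) \<partial>pop_dist n \<phi> 0)"
    unfolding runtime_potential_def by (intro nn_integral_mono ennreal_leI mult_left_mono harm_mono) auto
  also have "\<dots> = ennreal (real (n * Suc n) * harm n)"
    by (simp add: measure_pmf.emeasure_space_1)
  finally show ?thesis .
qed

lemma harm_le_ln_add_one: "0 < n \<Longrightarrow> harm n \<le> ln (real n) + 1"
  using euler_mascheroni_sequence_decreasing[of 1 n] by (simp add: harm_def)

lemma four_le_inverse_add_inverse_compl:
  fixes p :: real
  assumes "0 < p" "p < 1"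
  shows "4 \<le> 1 / p + 1 / (1 - p)"
proof -
  have "4 * (p * (1 - p)) \<le> 1"
    using zero_le_power2[of "2 * p - 1"] by (simp add: algebra_simps power2_eq_square)
  moreover have "1 / p + 1 / (1 - p) = 1 / (p * (1 - p))"
    using assms by (simp add: field_simps)
  ultimately show ?thesis
    using assms by (simp add: le_divide_eq)
qed

lemma n_mult_Suc_n_harm_le:
  fixes \<phi> :: real
  assumes "3 \<le> n" "0 < \<phi>" "\<phi> < 1"
  shows "real (n * Suc n) * harm n \<le> (1 / \<phi> + 1 / (1 - \<phi>)) * real n ^ 2 * ln (real n)"
proof -
  have "exp 1 \<le> real n" using exp_le assms(1) by linarith
  then have ln: "1 \<le> ln (real n)" using assms(1) by (simp add: ln_ge_iff)
  have "real (n * Suc n) * harm n \<le> (2 * real n ^ 2) * (2 * ln (real n))"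
    using assms(1) ln harm_le_ln_add_one[of n]
    by (intro mult_mono) (auto simp: power2_eq_square harm_nonneg)
  also have "\<dots> = 4 * (real n ^ 2 * ln (real n))"
    by simp
  also have "\<dots> \<le> (1 / \<phi> + 1 / (1 - \<phi>)) * (real n ^ 2 * ln (real n))"
    using four_le_inverse_add_inverse_compl[OF assms(2,3)] ln by (intro mult_right_mono) auto
  finally show ?thesis by (simp add: mult.assoc)
qed

theorem theorem2:
  shows "\<exists>C>0. \<exists>N. \<forall>n\<ge>N. \<forall>\<phi>::real. even n \<longrightarrow> 0 < \<phi> \<longrightarrow> \<phi> < 1 \<longrightarrow>
           expected_runtime n \<phi> \<le>
             ennreal (C * (1 / \<phi> + 1 / (1 - \<phi>)) * (real n ^ 2 / 2) * ln (real n))"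
proof -
  have "expected_runtime n \<phi> \<le> ennreal (2 * (1 / \<phi> + 1 / (1 - \<phi>)) * (real n ^ 2 / 2) * ln (real n))"
    if "3 \<le> n" "0 < \<phi>" "\<phi> < 1" for n \<phi>
  proof -
    have "2 * (1 / \<phi> + 1 / (1 - \<phi>)) * (real n ^ 2 / 2) * ln (real n)
        = (1 / \<phi> + 1 / (1 - \<phi>)) * real n ^ 2 * ln (real n)"
      by simp
    then show ?thesis
      using order_trans[OF expected_runtime_le ennreal_leI[OF n_mult_Suc_n_harm_le[OF that]]] by metis
  qed
  then show ?thesis by (intro exI[of _ 2] exI[of _ 3]) auto
qed

end
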